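(* Every Ferrers-convex matrix is convex and has unimodal row and column sum vectors.
   Context: A $(0,1)$-matrix is convex if the 1's occur consecutively in every row and in every column. A Ferrers array is a left-justified array of positions where the numbers of positions in the rows form a nonincreasing vector; a Ferrers matrix is a $(0,1)$-matrix the positions of whose 1's form a Ferrers array. Let $m_1,m_2,n_1,n_2$ be positive integers. A Ferrers-convex matrix is a matrix $A=\begin{bmatrix} A_{11} & A_{12}\\ A_{21} & A_{22}\end{bmatrix}$, where $A_{22}$, $A_{12}$, $A_{21}$, $A_{11}$ are matrices obtained by rotating some (possibly different) Ferrers matrices by $0$, $90$, $180$ and $270$ degrees counterclockwise, respectively, with $A_{11}$ of size $m_1\times n_1$ and $A_{22}$ of size $m_2\times n_2$ (which determines the sizes of $A_{12}$ and $A_{21}$). A vector is unimodal if its components are first nondecreasing and then nonincreasing. *)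

theory Defs
  imports Main
begin

text \<open>A p x q matrix is represented as a function M :: nat => nat => nat,
  with row indices i < p and column indices j < q (entries outside are irrelevant).\<close>

definition zero_one_matrix :: "nat \<Rightarrow> nat \<Rightarrow> (nat \<Rightarrow> nat \<Rightarrow> nat) \<Rightarrow> bool" where
  "zero_one_matrix p q M \<longleftrightarrow> (\<forall>i<p. \<forall>j<q. M i j = 0 \<or> M i j = 1)"

definition ferrers_matrix :: "nat \<Rightarrow> nat \<Rightarrow> (nat \<Rightarrow> nat \<Rightarrow> nat) \<Rightarrow> bool" where
  "ferrers_matrix p q F \<longleftrightarrow> zero_one_matrix p q F \<and>
     (\<exists>r :: nat \<Rightarrow> nat. (\<forall>i<p. r i \<le> q) \<and> (\<forall>i k. i \<le> k \<longrightarrow> k < p \<longrightarrow> r k \<le> r i) \<and>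
        (\<forall>i<p. \<forall>j<q. F i j = 1 \<longleftrightarrow> j < r i))"

text \<open>Counterclockwise rotations of a p x q matrix (90 and 270 give q x p matrices).\<close>
definition rot90 :: "nat \<Rightarrow> nat \<Rightarrow> (nat \<Rightarrow> nat \<Rightarrow> nat) \<Rightarrow> (nat \<Rightarrow> nat \<Rightarrow> nat)" where
  "rot90 p q F = (\<lambda>i j. F j (q - 1 - i))"

definition rot180 :: "nat \<Rightarrow> nat \<Rightarrow> (nat \<Rightarrow> nat \<Rightarrow> nat) \<Rightarrow> (nat \<Rightarrow> nat \<Rightarrow> nat)" where
  "rot180 p q F = (\<lambda>i j. F (p - 1 - i) (q - 1 - j))"

definition rot270 :: "nat \<Rightarrow> nat \<Rightarrow> (nat \<Rightarrow> nat \<Rightarrow> nat) \<Rightarrow> (nat \<Rightarrow> nat \<Rightarrow> nat)" where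
  "rot270 p q F = (\<lambda>i j. F (p - 1 - j) i)"

definition ferrers_convex :: "nat \<Rightarrow> nat \<Rightarrow> nat \<Rightarrow> nat \<Rightarrow> (nat \<Rightarrow> nat \<Rightarrow> nat) \<Rightarrow> bool" where
  "ferrers_convex m1 m2 n1 n2 A \<longleftrightarrow>
     (\<exists>F11 F12 F21 F22.
        ferrers_matrix m1 n1 F11 \<and> ferrers_matrix n2 m1 F12 \<and>
        ferrers_matrix n1 m2 F21 \<and> ferrers_matrix m2 n2 F22 \<and>
        (\<forall>i<m1. \<forall>j<n1. A i j = rot180 m1 n1 F11 i j) \<and>
        (\<forall>i<m1. \<forall>j<n2. A i (n1 + j) = rot90 n2 m1 F12 i j) \<and>
        (\<forall>i<m2. \<forall>j<n1. A (m1 + i) j = rot270 n1 m2 F21 i j) \<and>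
        (\<forall>i<m2. \<forall>j<n2. A (m1 + i) (n1 + j) = F22 i j))"

definition convex_matrix :: "nat \<Rightarrow> nat \<Rightarrow> (nat \<Rightarrow> nat \<Rightarrow> nat) \<Rightarrow> bool" where
  "convex_matrix p q A \<longleftrightarrow> zero_one_matrix p q A \<and>
     (\<forall>i<p. \<forall>j1 j j2. j1 \<le> j \<longrightarrow> j \<le> j2 \<longrightarrow> j2 < q \<longrightarrow> A i j1 = 1 \<longrightarrow> A i j2 = 1 \<longrightarrow> A i j = 1) \<and>
     (\<forall>j<q. \<forall>i1 i i2. i1 \<le> i \<longrightarrow> i \<le> i2 \<longrightarrow> i2 < p \<longrightarrow> A i1 j = 1 \<longrightarrow> A i2 j = 1 \<longrightarrow> A i j = 1)"

definition unimodal :: "nat \<Rightarrow> (nat \<Rightarrow> nat) \<Rightarrow> bool" where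
  "unimodal N v \<longleftrightarrow> (\<exists>k. (\<forall>i j. i \<le> j \<longrightarrow> j \<le> k \<longrightarrow> j < N \<longrightarrow> v i \<le> v j) \<and>
                          (\<forall>i j. k \<le> i \<longrightarrow> i \<le> j \<longrightarrow> j < N \<longrightarrow> v j \<le> v i))"

definition row_sums :: "nat \<Rightarrow> (nat \<Rightarrow> nat \<Rightarrow> nat) \<Rightarrow> nat \<Rightarrow> nat" where
  "row_sums q A = (\<lambda>i. \<Sum>j<q. A i j)"

definition col_sums :: "nat \<Rightarrow> (nat \<Rightarrow> nat \<Rightarrow> nat) \<Rightarrow> nat \<Rightarrow> nat" where
  "col_sums p A = (\<lambda>j. \<Sum>i<p. A i j)"

end

theory Submission
  imports Defs
begin

text \<open>A Ferrers matrix is antitone in both indices, so each block of a Ferrers-convex matrix is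
  monotone in both indices, in directions fixed by its rotation: every column is nondecreasing
  in the first m1 rows and nonincreasing in the remaining ones, and every row changes direction
  at column n1 in the same way. In a (0,1)-vector of this shape the 1's are consecutive, and the
  shape survives entrywise sums, so the row and column sum vectors have it too; such a vector
  is unimodal, with its peak at position m1 - 1 or m1.\<close>

definition rises_then_falls :: "nat \<Rightarrow> nat \<Rightarrow> (nat \<Rightarrow> 'a::order) \<Rightarrow> bool" where
  "rises_then_falls N m v \<longleftrightarrow>
     (\<forall>i j. i \<le> j \<longrightarrow> j < m \<longrightarrow> v i \<le> v j) \<and>
     (\<forall>i j. m \<le> i \<longrightarrow> i \<le> j \<longrightarrow> j < N \<longrightarrow> v j \<le> v i)"

lemma rises_then_fallsI:
  assumes "\<And>i j. i \<le> j \<Longrightarrow> j < m \<Longrightarrow> v i \<le> v j"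
    and "\<And>a b. a \<le> b \<Longrightarrow> b < n \<Longrightarrow> v (m + b) \<le> v (m + a)"
  shows "rises_then_falls (m + n) m v"
  unfolding rises_then_falls_def
proof (intro conjI allI impI)
  fix i j assume "m \<le> i" "i \<le> j" "j < m + n"
  then show "v j \<le> v i"
    using assms(2)[of "i - m" "j - m"] by simp
qed (use assms(1) in blast)

lemma unimodal_if_rises_then_falls:
  fixes v :: "nat \<Rightarrow> nat"
  assumes "rises_then_falls N m v"
  shows "unimodal N v"
proof -
  have up: "v i \<le> v j" if "i \<le> j" "j < m" for i j
    using assms that unfolding rises_then_falls_def by blast
  have down: "v j \<le> v i" if "m \<le> i" "i \<le> j" "j < N" for i j
    using assms that unfolding rises_then_falls_def by blast
  show ?thesis
  proof (cases "v (m - 1) \<le> v m")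
    case True
    have "v i \<le> v j" if "i \<le> j" "j \<le> m" for i j
    proof (cases "j < m")
      case False
      then have "j = m" using \<open>j \<le> m\<close> by simp
      show ?thesis
      proof (cases "i < m")
        case True
        then have "v i \<le> v (m - 1)" using up by simp
        with \<open>v (m - 1) \<le> v m\<close> \<open>j = m\<close> show ?thesis by simp
      qed (use \<open>i \<le> j\<close> \<open>j = m\<close> in simp)
    qed (use up that in blast)
    with down show ?thesis unfolding unimodal_def by blast
  next
    case False
    have "v j \<le> v i" if "m - 1 \<le> i" "i \<le> j" "j < N" for i j
    proof (cases "m \<le> i")
      case False
      then have "i = m - 1" using \<open>m - 1 \<le> i\<close> by simp
      show ?thesis
      proof (cases "j = i")
        case False
        then have "v j \<le> v m" using down \<open>i = m - 1\<close> \<open>i \<le> j\<close> \<open>j < N\<close> by simp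
        with \<open>\<not> v (m - 1) \<le> v m\<close> \<open>i = m - 1\<close> show ?thesis by simp
      qed simp
    qed (use down that in blast)
    moreover have "v i \<le> v j" if "i \<le> j" "j \<le> m - 1" for i j
      using up that False by (cases m) auto
    ultimately show ?thesis unfolding unimodal_def by blast
  qed
qed

lemma rises_then_falls_sum:
  fixes f :: "nat \<Rightarrow> 'b \<Rightarrow> 'a::ordered_comm_monoid_add"
  assumes "\<forall>k\<in>K. rises_then_falls N m (\<lambda>i. f i k)"
  shows "rises_then_falls N m (\<lambda>i. \<Sum>k\<in>K. f i k)"
  using assms unfolding rises_then_falls_def by (auto intro!: sum_mono)

lemma rises_then_falls_consecutive_ones:
  fixes c :: "nat \<Rightarrow> nat"
  assumes "rises_then_falls N m c" and "\<forall>i<N. c i \<le> 1"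
    and "i1 \<le> i" "i \<le> i2" "i2 < N" "c i1 = 1" "c i2 = 1"
  shows "c i = 1"
proof -
  have "c i \<le> 1" using assms(2,4,5) by simp
  moreover have "c i1 \<le> c i \<or> c i2 \<le> c i"
    using assms(1,3-5) unfolding rises_then_falls_def by (cases "i < m") simp_all
  ultimately show ?thesis using assms(6,7) by linarith
qed

lemma convex_matrix_if_rises_then_falls:
  assumes "zero_one_matrix p q A"
    and "\<forall>j<q. rises_then_falls p m (\<lambda>i. A i j)"
    and "\<forall>i<p. rises_then_falls q n (\<lambda>j. A i j)"
  shows "convex_matrix p q A"
proof -
  have le_one: "A i j \<le> 1" if "i < p" "j < q" for i j
    using assms(1) that unfolding zero_one_matrix_def by fastforce
  show ?thesis
    unfolding convex_matrix_def
  proof (intro conjI assms(1) allI impI)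
    fix i j1 j j2 assume "i < p" "j1 \<le> j" "j \<le> j2" "j2 < q" "A i j1 = 1" "A i j2 = 1"
    then show "A i j = 1"
      using assms(3) le_one by (intro rises_then_falls_consecutive_ones[of q n "\<lambda>j. A i j" j1 j j2]) auto
  next
    fix j i1 i i2 assume "j < q" "i1 \<le> i" "i \<le> i2" "i2 < p" "A i1 j = 1" "A i2 j = 1"
    then show "A i j = 1"
      using assms(2) le_one by (intro rises_then_falls_consecutive_ones[of p m "\<lambda>i. A i j" i1 i i2]) auto
  qed
qed

lemma unimodal_row_sums:
  assumes "\<forall>j<q. rises_then_falls p m (\<lambda>i. A i j)"
  shows "unimodal p (row_sums q A)"
  unfolding row_sums_def
  by (rule unimodal_if_rises_then_falls[of _ m], rule rises_then_falls_sum) (use assms in simp)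

lemma unimodal_col_sums:
  assumes "\<forall>i<p. rises_then_falls q n (\<lambda>j. A i j)"
  shows "unimodal q (col_sums p A)"
  unfolding col_sums_def
  by (rule unimodal_if_rises_then_falls[of _ n], rule rises_then_falls_sum) (use assms in simp)

lemma ferrers_matrix_antimono:
  assumes "ferrers_matrix p q F" "i \<le> i'" "i' < p" "j \<le> j'" "j' < q"
  shows "F i' j' \<le> F i j"
proof -
  obtain r where r_antimono: "\<forall>i k. i \<le> k \<longrightarrow> k < p \<longrightarrow> r k \<le> r i"
    and ones: "\<forall>i<p. \<forall>j<q. F i j = 1 \<longleftrightarrow> j < r i"
    using assms(1) unfolding ferrers_matrix_def by blast
  have "F i' j' = 0 \<or> F i' j' = 1"
    using assms(1,3,5) unfolding ferrers_matrix_def zero_one_matrix_def by blast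
  moreover have "F i j = 1" if "F i' j' = 1"
  proof -
    have "j' < r i'" using ones that assms(3,5) by blast
    also have "r i' \<le> r i" using r_antimono assms(2,3) by blast
    finally show ?thesis using ones assms by simp
  qed
  ultimately show ?thesis by fastforce
qed

lemma rot180_ferrers_mono:
  assumes "ferrers_matrix p q F" "i \<le> i'" "i' < p" "j \<le> j'" "j' < q"
  shows "rot180 p q F i j \<le> rot180 p q F i' j'"
  unfolding rot180_def by (rule ferrers_matrix_antimono[OF assms(1)]) (use assms in auto)

lemma rot90_ferrers_mono:
  assumes "ferrers_matrix p q F" "i \<le> i'" "i' < q" "j \<le> j'" "j' < p"
  shows "rot90 p q F i j' \<le> rot90 p q F i' j"
  unfolding rot90_def by (rule ferrers_matrix_antimono[OF assms(1)]) (use assms in auto)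

lemma rot270_ferrers_mono:
  assumes "ferrers_matrix p q F" "i \<le> i'" "i' < q" "j \<le> j'" "j' < p"
  shows "rot270 p q F i' j \<le> rot270 p q F i j'"
  unfolding rot270_def by (rule ferrers_matrix_antimono[OF assms(1)]) (use assms in auto)

lemma less_add_cases:
  fixes k :: nat
  assumes "k < m + n"
  obtains (low) "k < m" | (high) b where "k = m + b" "b < n"
  using assms by (metis add_less_cancel_left le_add_diff_inverse not_less)

locale ferrers_convex_blocks =
  fixes m1 m2 n1 n2 :: nat and A F11 F12 F21 F22 :: "nat \<Rightarrow> nat \<Rightarrow> nat"
  assumes ferrers11: "ferrers_matrix m1 n1 F11" and ferrers12: "ferrers_matrix n2 m1 F12"
    and ferrers21: "ferrers_matrix n1 m2 F21" and ferrers22: "ferrers_matrix m2 n2 F22"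
    and block11: "\<And>i j. i < m1 \<Longrightarrow> j < n1 \<Longrightarrow> A i j = rot180 m1 n1 F11 i j"
    and block12: "\<And>i j. i < m1 \<Longrightarrow> j < n2 \<Longrightarrow> A i (n1 + j) = rot90 n2 m1 F12 i j"
    and block21: "\<And>i j. i < m2 \<Longrightarrow> j < n1 \<Longrightarrow> A (m1 + i) j = rot270 n1 m2 F21 i j"
    and block22: "\<And>i j. i < m2 \<Longrightarrow> j < n2 \<Longrightarrow> A (m1 + i) (n1 + j) = F22 i j"
begin

lemma column_rises_then_falls:
  assumes "j < n1 + n2"
  shows "rises_then_falls (m1 + m2) m1 (\<lambda>i. A i j)"
  using assms
proof (cases rule: less_add_cases)
  case low
  show ?thesis
  proof (rule rises_then_fallsI)
    fix i i' assume "i \<le> i'" "i' < m1"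
    then show "A i j \<le> A i' j"
      using rot180_ferrers_mono[OF ferrers11, of i i' j j] block11 low by simp
  next
    fix a a' assume "a \<le> a'" "a' < m2"
    then show "A (m1 + a') j \<le> A (m1 + a) j"
      using rot270_ferrers_mono[OF ferrers21, of a a' j j] block21 low by simp
  qed
next
  case (high b)
  show ?thesis
  proof (rule rises_then_fallsI)
    fix i i' assume "i \<le> i'" "i' < m1"
    then show "A i j \<le> A i' j"
      using rot90_ferrers_mono[OF ferrers12, of i i' b b] block12 high by simp
  next
    fix a a' assume "a \<le> a'" "a' < m2"
    then show "A (m1 + a') j \<le> A (m1 + a) j"
      using ferrers_matrix_antimono[OF ferrers22, of a a' b b] block22 high by simp
  qed
qed

lemma row_rises_then_falls:
  assumes "i < m1 + m2"
  shows "rises_then_falls (n1 + n2) n1 (\<lambda>j. A i j)"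
  using assms
proof (cases rule: less_add_cases)
  case low
  show ?thesis
  proof (rule rises_then_fallsI)
    fix j j' assume "j \<le> j'" "j' < n1"
    then show "A i j \<le> A i j'"
      using rot180_ferrers_mono[OF ferrers11, of i i j j'] block11 low by simp
  next
    fix b b' assume "b \<le> b'" "b' < n2"
    then show "A i (n1 + b') \<le> A i (n1 + b)"
      using rot90_ferrers_mono[OF ferrers12, of i i b b'] block12 low by simp
  qed
next
  case (high a)
  show ?thesis
  proof (rule rises_then_fallsI)
    fix j j' assume "j \<le> j'" "j' < n1"
    then show "A i j \<le> A i j'"
      using rot270_ferrers_mono[OF ferrers21, of a a j j'] block21 high by simp
  next
    fix b b' assume "b \<le> b'" "b' < n2"
    then show "A i (n1 + b') \<le> A i (n1 + b)"
      using ferrers_matrix_antimono[OF ferrers22, of a a b b'] block22 high by simp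
  qed
qed

lemma zero_one: "zero_one_matrix (m1 + m2) (n1 + n2) A"
  unfolding zero_one_matrix_def
proof (intro allI impI)
  have entry: "F i j = 0 \<or> F i j = 1" if "ferrers_matrix p q F" "i < p" "j < q" for p q F i j
    using that unfolding ferrers_matrix_def zero_one_matrix_def by blast
  fix i j assume i: "i < m1 + m2" and j: "j < n1 + n2"
  show "A i j = 0 \<or> A i j = 1"
  proof (cases rule: less_add_cases[OF i]; cases rule: less_add_cases[OF j])
    assume "i < m1" "j < n1"
    then show ?thesis
      using entry[OF ferrers11, of "m1 - 1 - i" "n1 - 1 - j"] by (simp add: block11 rot180_def)
  next
    fix b assume "i < m1" "j = n1 + b" "b < n2"
    then show ?thesis
      using entry[OF ferrers12, of b "m1 - 1 - i"] by (simp add: block12 rot90_def)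
  next
    fix a assume "i = m1 + a" "a < m2" "j < n1"
    then show ?thesis
      using entry[OF ferrers21, of "n1 - 1 - j" a] by (simp add: block21 rot270_def)
  next
    fix a b assume "i = m1 + a" "a < m2" "j = n1 + b" "b < n2"
    then show ?thesis
      using entry[OF ferrers22, of a b] by (simp add: block22)
  qed
qed

end

lemma ferrers_convexE:
  assumes "ferrers_convex m1 m2 n1 n2 A"
  obtains F11 F12 F21 F22 where "ferrers_convex_blocks m1 m2 n1 n2 A F11 F12 F21 F22"
  using assms unfolding ferrers_convex_def
  by (elim exE conjE, intro that ferrers_convex_blocks.intro) simp_all

theorem mainTheorem7:
  fixes m1 m2 n1 n2 :: nat and A :: "nat \<Rightarrow> nat \<Rightarrow> nat"
  assumes "0 < m1" "0 < m2" "0 < n1" "0 < n2"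
    and "ferrers_convex m1 m2 n1 n2 A"
  shows "convex_matrix (m1 + m2) (n1 + n2) A
       \<and> unimodal (m1 + m2) (row_sums (n1 + n2) A)
       \<and> unimodal (n1 + n2) (col_sums (m1 + m2) A)"
proof -
  obtain F11 F12 F21 F22 where "ferrers_convex_blocks m1 m2 n1 n2 A F11 F12 F21 F22"
    using assms(5) by (rule ferrers_convexE)
  then interpret ferrers_convex_blocks m1 m2 n1 n2 A F11 F12 F21 F22 .
  show ?thesis
    using convex_matrix_if_rises_then_falls[OF zero_one]
      unimodal_row_sums unimodal_col_sums column_rises_then_falls row_rises_then_falls
    by blast
qed

end
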